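(* Let $\lambda\ge0$ and let $\widehat{\boldsymbol\theta}_\lambda\in\mathcal P_{\mathbf a,R}$ be a minimum-norm solution of the $\lambda$-ERM problem. If the well-separation assumption (A3) holds with constants $K>0$, $r>1$, then for all $t>0$, \[\mathbb P\big(\operatorname{dist}(\widehat{\boldsymbol\theta}_\lambda,\operatorname{argmin}_{\mathcal P_{\mathbf a,R}}\mathcal R_{\ell,\lambda})\ge t\big)\le4\,\mathrm{Cov}_\infty\Big(\mathcal{NN},\frac{Kt^r}{24\,\mathrm{Lip}(\mathcal F_\sigma)}\Big)\exp\Big(\frac{-nK^2t^{2r}}{288}\Big).\]
   Context: Setting: $\mathcal X=[0,1]^d$, $\rho$ a probability distribution on $\mathcal X\times\{-1,1\}$, $(X,Y)\sim\rho$, $(x_i,y_i)_{i=1}^n$ i.i.d. from $\rho$ (the probability is over this sample). Networks: $\sigma(t)=\max\{0,t\}$; architecture $\mathbf a=(a_0,\dots,a_L)$, $a_0=d$, $a_L=1$, width $W=\max_la_l$, $P(\mathbf a)=\sum_l(a_la_{l-1}+a_l)$; parametrization $\boldsymbol\theta=((W_l,B_l))_{l=1}^L$, $W_l\in\mathbb R^{a_l\times a_{l-1}}$, $B_l\in\mathbb R^{a_l}$, viewed as a vector in $\mathbb R^{P(\mathbf a)}$ with norms $|\cdot|_\infty$, $|\cdot|_p$; $\mathcal P_{\mathbf a,R}$ is the set of parametrizations with entries in $[-R,R]$. Realization $f(x;\boldsymbol\theta)=\operatorname{clip}_1(T_L\circ\sigma\circ\cdots\circ\sigma\circ T_1(x))$,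 $T_l(z)=W_lz+B_l$, $\operatorname{clip}_1(t)=\max(-1,\min(1,t))$. Realization map $\mathcal F_\sigma:\boldsymbol\theta\mapsto f(\cdot;\boldsymbol\theta)|_{\mathcal X}$ on $\mathcal P_{\mathbf a,R}$ with image $\mathcal{NN}(\mathbf a,W,L,R)$, $\mathrm{Lip}(\mathcal F_\sigma)=\sup_{\boldsymbol\theta\ne\boldsymbol\theta'}\|\mathcal F_\sigma(\boldsymbol\theta)-\mathcal F_\sigma(\boldsymbol\theta')\|_{C(\mathcal X)}/|\boldsymbol\theta-\boldsymbol\theta'|_\infty$. $\mathrm{Cov}_\infty(\mathcal{NN},\varepsilon)$: smallest $N$ such that some $g_1,\dots,g_N\in L^\infty(\mathcal X)$ satisfy that every $f\in\mathcal{NN}(\mathbf a,W,L,R)$ has $\|f-g_j\|_{L^\infty}\le\varepsilon$ for some $j$. Fix $0<p<\infty$: $\widehat{\mathcal R}_{\ell,\lambda}(\boldsymbol\theta)=\frac1n\sum_i(f(x_i;\boldsymbol\theta)-y_i)^2+\frac\lambda2|\boldsymbol\theta|_p^p$, $\mathcal R_{\ell,\lambda}(\boldsymbol\theta)=\mathbb E[(f(X;\boldsymbol\theta)-Y)^2]+\frac\lambda2|\boldsymbol\theta|_p^p$. A minimum-norm solution of the $\lambda$-ERM problem is a minimizer of $|\boldsymbol\theta|_\infty$ among minimizers of $\widehat{\mathcal R}_{\ell,\lambda}$ over $\mathcal P_{\mathbf a,R}$. $\operatorname{dist}(\boldsymbol\theta,A)=\inf_{\boldsymbol\theta'\in A}|\boldsymbol\theta-\boldsymbol\theta'|_\infty$.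 Assumption (A3): there are $K>0$, $r>1$ such that for all $\lambda\ge0$, $t>0$ and every $\boldsymbol\theta_\lambda\in\operatorname{argmin}_{\mathcal P_{\mathbf a,R}}\mathcal R_{\ell,\lambda}$: $\inf_{\boldsymbol\theta\in\mathcal P_{\mathbf a,R}:\operatorname{dist}(\boldsymbol\theta,\operatorname{argmin}_{\mathcal P_{\mathbf a,R}}\mathcal R_{\ell,\lambda})\ge t}\mathcal R_{\ell,\lambda}(\boldsymbol\theta)-\mathcal R_{\ell,\lambda}(\boldsymbol\theta_\lambda)\ge Kt^r$. *)

theory Defs
  imports "HOL-Probability.Probability"
begin

definition cube :: "nat \<Rightarrow> (nat \<Rightarrow> real) set" where
  "cube d = PiE {..<d} (\<lambda>_. {0..1::real})"

definition cube_measure :: "nat \<Rightarrow> (nat \<Rightarrow> real) measure" where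
  "cube_measure d = PiM {..<d} (\<lambda>_. restrict_space lborel {0..1::real})"

text \<open>Architecture a = [a_0,...,a_L] as a list; L = length a - 1.
  Number of parameters P(a) = sum_{l=1}^L (a_l a_{l-1} + a_l).\<close>
definition nparams :: "nat list \<Rightarrow> nat" where
  "nparams a = (\<Sum>l\<in>{1..<length a}. a!l * a!(l-1) + a!l)"

definition layer_off :: "nat list \<Rightarrow> nat \<Rightarrow> nat" where
  "layer_off a l = (\<Sum>k\<in>{1..<l}. a!k * a!(k-1) + a!k)"

text \<open>Parameter vector theta in R^{P(a)}: a function nat => real; entries at index >= P(a) are 0.
  W_l(i,j) = theta(off_l + i*a_{l-1} + j), B_l(i) = theta(off_l + a_l a_{l-1} + i).
  Affine map T_l.\<close>
definition affine_layer :: "nat list \<Rightarrow> (nat \<Rightarrow> real) \<Rightarrow> nat \<Rightarrow> (nat \<Rightarrow> real) \<Rightarrow> (nat \<Rightarrow> real)" where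
  "affine_layer a \<theta> l z = (\<lambda>i. if i < a!l then
      (\<Sum>j<a!(l-1). \<theta> (layer_off a l + i * a!(l-1) + j) * z j)
        + \<theta> (layer_off a l + a!l * a!(l-1) + i)
    else 0)"

definition relu :: "real \<Rightarrow> real" where
  "relu t = max 0 t"

fun hidden :: "nat list \<Rightarrow> (nat \<Rightarrow> real) \<Rightarrow> nat \<Rightarrow> (nat \<Rightarrow> real) \<Rightarrow> (nat \<Rightarrow> real)" where
  "hidden a \<theta> 0 x = x"
| "hidden a \<theta> (Suc l) x = (\<lambda>i. relu (affine_layer a \<theta> (Suc l) (hidden a \<theta> l x) i))"

definition clip1 :: "real \<Rightarrow> real" where
  "clip1 t = max (-1) (min 1 t)"

definition realize :: "nat list \<Rightarrow> (nat \<Rightarrow> real) \<Rightarrow> (nat \<Rightarrow> real) \<Rightarrow> real" where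
  "realize a \<theta> x = clip1 (affine_layer a \<theta> (length a - 1) (hidden a \<theta> (length a - 2) x) 0)"

definition params :: "nat list \<Rightarrow> real \<Rightarrow> (nat \<Rightarrow> real) set" where
  "params a R = {\<theta>. (\<forall>i<nparams a. \<bar>\<theta> i\<bar> \<le> R) \<and> (\<forall>i\<ge>nparams a. \<theta> i = 0)}"

definition norm_inf :: "nat list \<Rightarrow> (nat \<Rightarrow> real) \<Rightarrow> real" where
  "norm_inf a \<theta> = Max ((\<lambda>i. \<bar>\<theta> i\<bar>) ` {..<nparams a})"

definition norm_pp :: "nat list \<Rightarrow> real \<Rightarrow> (nat \<Rightarrow> real) \<Rightarrow> real" where
  "norm_pp a p \<theta> = (\<Sum>i<nparams a. \<bar>\<theta> i\<bar> powr p)"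

definition emp_risk :: "nat list \<Rightarrow> real \<Rightarrow> real \<Rightarrow> nat \<Rightarrow> (nat \<Rightarrow> (nat \<Rightarrow> real) \<times> real) \<Rightarrow> (nat \<Rightarrow> real) \<Rightarrow> real" where
  "emp_risk a p lam n z \<theta> =
     (1 / real n) * (\<Sum>i<n. (realize a \<theta> (fst (z i)) - snd (z i))\<^sup>2) + lam / 2 * norm_pp a p \<theta>"

definition pop_risk :: "nat list \<Rightarrow> real \<Rightarrow> real \<Rightarrow> ((nat \<Rightarrow> real) \<times> real) measure \<Rightarrow> (nat \<Rightarrow> real) \<Rightarrow> real" where
  "pop_risk a p lam \<rho> \<theta> =
     (\<integral>w. (realize a \<theta> (fst w) - snd w)\<^sup>2 \<partial>\<rho>) + lam / 2 * norm_pp a p \<theta>"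

definition argmin_on :: "'b set \<Rightarrow> ('b \<Rightarrow> real) \<Rightarrow> 'b set" where
  "argmin_on S F = {x\<in>S. \<forall>y\<in>S. F x \<le> F y}"

definition min_norm_sol :: "nat list \<Rightarrow> real \<Rightarrow> real \<Rightarrow> real \<Rightarrow> nat \<Rightarrow> (nat \<Rightarrow> (nat \<Rightarrow> real) \<times> real) \<Rightarrow> (nat \<Rightarrow> real) \<Rightarrow> bool" where
  "min_norm_sol a R p lam n z \<theta> \<longleftrightarrow>
     \<theta> \<in> argmin_on (argmin_on (params a R) (emp_risk a p lam n z)) (norm_inf a)"

definition pdist :: "nat list \<Rightarrow> (nat \<Rightarrow> real) \<Rightarrow> (nat \<Rightarrow> real) set \<Rightarrow> real" where
  "pdist a \<theta> A = Inf ((\<lambda>\<theta>'. norm_inf a (\<lambda>i. \<theta> i - \<theta>' i)) ` A)"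

definition NN :: "nat list \<Rightarrow> real \<Rightarrow> ((nat \<Rightarrow> real) \<Rightarrow> real) set" where
  "NN a R = (\<lambda>\<theta>. restrict (realize a \<theta>) (cube (a!0))) ` params a R"

definition Lip_real :: "nat list \<Rightarrow> real \<Rightarrow> real" where
  "Lip_real a R = Sup {(SUP x\<in>cube (a!0). \<bar>realize a \<theta> x - realize a \<theta>' x\<bar>) / norm_inf a (\<lambda>i. \<theta> i - \<theta>' i)
       | \<theta> \<theta>'. \<theta> \<in> params a R \<and> \<theta>' \<in> params a R \<and> \<theta> \<noteq> \<theta>'}"

definition Cov_inf :: "nat list \<Rightarrow> real \<Rightarrow> real \<Rightarrow> nat" where
  "Cov_inf a R \<epsilon> = (LEAST N. \<exists>g :: nat \<Rightarrow> (nat \<Rightarrow> real) \<Rightarrow> real.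
      (\<forall>j<N. g j \<in> borel_measurable (cube_measure (a!0))
             \<and> esssup (cube_measure (a!0)) (\<lambda>x. ereal \<bar>g j x\<bar>) < \<infinity>)
    \<and> (\<forall>f\<in>NN a R. \<exists>j<N. esssup (cube_measure (a!0)) (\<lambda>x. ereal \<bar>f x - g j x\<bar>) \<le> ereal \<epsilon>))"

definition A3 :: "nat list \<Rightarrow> real \<Rightarrow> real \<Rightarrow> ((nat \<Rightarrow> real) \<times> real) measure \<Rightarrow> real \<Rightarrow> real \<Rightarrow> bool" where
  "A3 a R p \<rho> K r \<longleftrightarrow> (\<forall>lam\<ge>0. \<forall>t>0. \<forall>\<theta>l\<in>argmin_on (params a R) (pop_risk a p lam \<rho>).
      \<forall>\<theta>\<in>params a R. pdist a \<theta> (argmin_on (params a R) (pop_risk a p lam \<rho>)) \<ge> t \<longrightarrow>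
        pop_risk a p lam \<rho> \<theta> - pop_risk a p lam \<rho> \<theta>l \<ge> K * t powr r)"

end

theory Submission
  imports Defs
begin

text \<open>If the ERM solution \<open>h\<close> is at distance at least \<open>t\<close> from the population minimisers, then
  by (A3) its population risk exceeds the minimum by \<open>K t\<^sup>r\<close>, whereas its empirical risk does not
  exceed that of a fixed population minimiser \<open>\<theta>\<^sup>*\<close>. An \<open>L\<^sup>\<infinity>\<close>-cover of the network class at scale
  \<open>\<epsilon> = K t\<^sup>r / (24 Lip)\<close> yields a network \<open>\<phi>\<close> from a fixed finite family, uniformly \<open>2\<epsilon>\<close>-close to
  \<open>h\<close>; as the squared loss is 4-Lipschitz on \<open>[-1, 1]\<close>, passing from \<open>h\<close> to \<open>\<phi>\<close> changes
  both the expected and the averaged loss by at most \<open>8\<epsilon> \<le> K t\<^sup>r / 3\<close>. Hence the empirical loss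
  of \<open>\<phi>\<close> lies \<open>K t\<^sup>r / 6\<close> below its mean or that of \<open>\<theta>\<^sup>*\<close> lies \<open>K t\<^sup>r / 6\<close> above its mean.
  Hoeffding's inequality for losses in \<open>[0, 4]\<close> and a union bound over at most
  \<open>Cov\<^sub>\<infinity> + 1 \<le> 2 Cov\<^sub>\<infinity>\<close> events give the claim.\<close>


subsection \<open>Lipschitz continuity of the realization map\<close>

lemma sum_mult_diff_bound:
  fixes w w' z z' :: "nat \<Rightarrow> real"
  assumes "\<And>j. j < m \<Longrightarrow> \<bar>w' j\<bar> \<le> R" "\<And>j. j < m \<Longrightarrow> \<bar>w j - w' j\<bar> \<le> \<delta>"
    and "\<And>j. j < m \<Longrightarrow> \<bar>z j\<bar> \<le> M" "\<And>j. j < m \<Longrightarrow> \<bar>z j - z' j\<bar> \<le> D"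
  shows "\<bar>(\<Sum>j<m. w j * z j) - (\<Sum>j<m. w' j * z' j)\<bar> \<le> real m * (\<delta> * M + R * D)"
proof -
  have "\<bar>(\<Sum>j<m. w j * z j) - (\<Sum>j<m. w' j * z' j)\<bar>
      = \<bar>\<Sum>j<m. (w j - w' j) * z j + w' j * (z j - z' j)\<bar>"
    by (simp add: sum_subtractf[symmetric] algebra_simps)
  also have "\<dots> \<le> (\<Sum>j<m. \<bar>w j - w' j\<bar> * \<bar>z j\<bar> + \<bar>w' j\<bar> * \<bar>z j - z' j\<bar>)"
    by (rule order_trans[OF sum_abs sum_mono]) (simp add: abs_mult[symmetric] abs_triangle_ineq)
  also have "\<dots> \<le> (\<Sum>j<m. \<delta> * M + R * D)"
    by (intro sum_mono add_mono mult_mono') (use assms in auto)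
  finally show ?thesis by simp
qed

lemma sum_mult_abs_bound:
  fixes w z :: "nat \<Rightarrow> real"
  assumes "\<And>j. j < m \<Longrightarrow> \<bar>w j\<bar> \<le> R" "\<And>j. j < m \<Longrightarrow> \<bar>z j\<bar> \<le> M"
  shows "\<bar>\<Sum>j<m. w j * z j\<bar> \<le> real m * (R * M)"
  using sum_mult_diff_bound[of m "\<lambda>_. 0" 0 "\<lambda>j. - w j" R z M z 0] assms by (simp add: sum_negf)

fun act_bound :: "nat list \<Rightarrow> real \<Rightarrow> nat \<Rightarrow> real" where
  "act_bound a R 0 = 1"
| "act_bound a R (Suc l) = R * (real (a!l) * act_bound a R l + 1)"

fun act_lip :: "nat list \<Rightarrow> real \<Rightarrow> nat \<Rightarrow> real" where
  "act_lip a R 0 = 1"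
| "act_lip a R (Suc l) = real (a!l) * (act_bound a R l + R * act_lip a R l) + 1"

definition realize_lip :: "nat list \<Rightarrow> real \<Rightarrow> real" where
  "realize_lip a R = act_lip a R (length a - 1)"

lemma act_bound_nonneg: "0 \<le> R \<Longrightarrow> 0 \<le> act_bound a R l"
  by (induction l) auto

lemma act_lip_ge_1: "0 \<le> R \<Longrightarrow> 1 \<le> act_lip a R l"
  by (induction l) (auto intro!: mult_nonneg_nonneg add_nonneg_nonneg act_bound_nonneg)

lemma realize_lip_ge_1: "0 \<le> R \<Longrightarrow> 1 \<le> realize_lip a R"
  unfolding realize_lip_def by (rule act_lip_ge_1)

lemma affine_layer_eq:
  "i < a!Suc l \<Longrightarrow> affine_layer a \<theta> (Suc l) z i =
     (\<Sum>j<a!l. \<theta> (layer_off a (Suc l) + i * a!l + j) * z j) + \<theta> (layer_off a (Suc l) + a!Suc l * a!l + i)"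
  by (simp add: affine_layer_def)

lemma affine_layer_bounds:
  assumes th: "\<And>k. \<bar>\<theta> k\<bar> \<le> R" "\<And>k. \<bar>\<theta>' k\<bar> \<le> R" "\<And>k. \<bar>\<theta> k - \<theta>' k\<bar> \<le> \<delta>"
    and z: "\<And>j. j < a!l \<Longrightarrow> \<bar>z j\<bar> \<le> M" "\<And>j. j < a!l \<Longrightarrow> \<bar>z j - z' j\<bar> \<le> D"
    and i: "i < a!Suc l"
  shows "\<bar>affine_layer a \<theta> (Suc l) z i\<bar> \<le> R * (real (a!l) * M + 1)"
    and "\<bar>affine_layer a \<theta> (Suc l) z i - affine_layer a \<theta>' (Suc l) z' i\<bar>
           \<le> real (a!l) * (\<delta> * M + R * D) + \<delta>"
proof -
  let ?w = "\<lambda>\<theta> j. \<theta> (layer_off a (Suc l) + i * a!l + j)" and ?b = "layer_off a (Suc l) + a!Suc l * a!l + i"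
  have "\<bar>\<Sum>j<a!l. ?w \<theta> j * z j\<bar> \<le> real (a!l) * (R * M)"
    by (rule sum_mult_abs_bound) (use th z in auto)
  then show "\<bar>affine_layer a \<theta> (Suc l) z i\<bar> \<le> R * (real (a!l) * M + 1)"
    unfolding affine_layer_eq[OF i] using th(1)[of ?b] by (simp add: algebra_simps)
  have "\<bar>(\<Sum>j<a!l. ?w \<theta> j * z j) - (\<Sum>j<a!l. ?w \<theta>' j * z' j)\<bar> \<le> real (a!l) * (\<delta> * M + R * D)"
    by (rule sum_mult_diff_bound) (use th z in auto)
  then show "\<bar>affine_layer a \<theta> (Suc l) z i - affine_layer a \<theta>' (Suc l) z' i\<bar>
      \<le> real (a!l) * (\<delta> * M + R * D) + \<delta>"
    unfolding affine_layer_eq[OF i] using th(3)[of ?b] by linarith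
qed

lemma relu_abs_le: "\<bar>relu u\<bar> \<le> \<bar>u\<bar>" and relu_abs_diff_le: "\<bar>relu u - relu v\<bar> \<le> \<bar>u - v\<bar>"
  by (auto simp: relu_def)

lemma clip1_abs_le: "\<bar>clip1 u\<bar> \<le> 1" and clip1_abs_diff_le: "\<bar>clip1 u - clip1 v\<bar> \<le> \<bar>u - v\<bar>"
  by (auto simp: clip1_def)

lemma realize_abs_le: "\<bar>realize a \<theta> x\<bar> \<le> 1"
  by (simp add: realize_def clip1_abs_le)

lemma hidden_estimates:
  assumes th: "\<And>k. \<bar>\<theta> k\<bar> \<le> R" "\<And>k. \<bar>\<theta>' k\<bar> \<le> R" "\<And>k. \<bar>\<theta> k - \<theta>' k\<bar> \<le> \<delta>"
    and x: "\<And>j. j < a!0 \<Longrightarrow> \<bar>x j\<bar> \<le> 1" "\<And>j. j < a!0 \<Longrightarrow> \<bar>x' j\<bar> \<le> 1"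
      "\<And>j. j < a!0 \<Longrightarrow> \<bar>x j - x' j\<bar> \<le> \<delta>"
    and i: "i < a!l"
  shows "\<bar>hidden a \<theta> l x i\<bar> \<le> act_bound a R l" and "\<bar>hidden a \<theta>' l x' i\<bar> \<le> act_bound a R l"
    and "\<bar>hidden a \<theta> l x i - hidden a \<theta>' l x' i\<bar> \<le> act_lip a R l * \<delta>"
  using i
proof (induction l arbitrary: i)
  case 0
  { case 1 then show ?case using x by simp }
  { case 2 then show ?case using x by simp }
  { case 3 then show ?case using x by simp }
next
  case (Suc l)
  have th': "\<And>k. \<bar>\<theta>' k - \<theta> k\<bar> \<le> \<delta>" using th(3) by (simp add: abs_minus_commute)
  { case 1
    have "\<bar>affine_layer a \<theta> (Suc l) (hidden a \<theta> l x) i\<bar> \<le> act_bound a R (Suc l)"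
      using affine_layer_bounds(1)[OF th, where D=0 and z'="hidden a \<theta> l x"] Suc 1 by auto
    then show ?case using relu_abs_le order_trans by fastforce }
  { case 2
    have "\<bar>affine_layer a \<theta>' (Suc l) (hidden a \<theta>' l x') i\<bar> \<le> act_bound a R (Suc l)"
      using affine_layer_bounds(1)[OF th(2,1) th', where D=0 and z'="hidden a \<theta>' l x'"] Suc 2 by auto
    then show ?case using relu_abs_le order_trans by fastforce }
  { case 3
    have "\<bar>affine_layer a \<theta> (Suc l) (hidden a \<theta> l x) i - affine_layer a \<theta>' (Suc l) (hidden a \<theta>' l x') i\<bar>
        \<le> real (a!l) * (\<delta> * act_bound a R l + R * (act_lip a R l * \<delta>)) + \<delta>"
      by (rule affine_layer_bounds(2)[OF th]) (use Suc 3 in auto)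
    also have "\<dots> = act_lip a R (Suc l) * \<delta>" by (simp add: algebra_simps)
    finally show ?case using relu_abs_diff_le order_trans by fastforce }
qed

lemma realize_lipschitz:
  assumes len: "length a \<ge> 2"
    and th: "\<And>k. \<bar>\<theta> k\<bar> \<le> R" "\<And>k. \<bar>\<theta>' k\<bar> \<le> R" "\<And>k. \<bar>\<theta> k - \<theta>' k\<bar> \<le> \<delta>"
    and x: "\<And>j. j < a!0 \<Longrightarrow> \<bar>x j\<bar> \<le> 1" "\<And>j. j < a!0 \<Longrightarrow> \<bar>x' j\<bar> \<le> 1"
      "\<And>j. j < a!0 \<Longrightarrow> \<bar>x j - x' j\<bar> \<le> \<delta>"
  shows "\<bar>realize a \<theta> x - realize a \<theta>' x'\<bar> \<le> realize_lip a R * \<delta>"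
proof -
  define l where "l = length a - 2"
  have L: "length a - 1 = Suc l" using len by (simp add: l_def)
  have R: "0 \<le> R" and \<delta>: "0 \<le> \<delta>" using th(1,3)[of 0] by linarith+
  note H = hidden_estimates[OF th x]
  have "\<bar>affine_layer a \<theta> (Suc l) (hidden a \<theta> l x) 0 - affine_layer a \<theta>' (Suc l) (hidden a \<theta>' l x') 0\<bar>
        \<le> realize_lip a R * \<delta>"
  proof (cases "0 < a!Suc l")
    case True
    have "\<bar>affine_layer a \<theta> (Suc l) (hidden a \<theta> l x) 0 - affine_layer a \<theta>' (Suc l) (hidden a \<theta>' l x') 0\<bar>
        \<le> real (a!l) * (\<delta> * act_bound a R l + R * (act_lip a R l * \<delta>)) + \<delta>"
      by (rule affine_layer_bounds(2)[OF th]) (use H True in auto)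
    also have "\<dots> = realize_lip a R * \<delta>" unfolding realize_lip_def L by (simp add: algebra_simps)
    finally show ?thesis .
  qed (use realize_lip_ge_1[OF R, of a] \<delta> in \<open>simp add: affine_layer_def\<close>)
  then show ?thesis unfolding realize_def L l_def[symmetric]
    using clip1_abs_diff_le order_trans by blast
qed

lemma cube_nonempty: "cube d \<noteq> {}"
  unfolding cube_def by (simp add: PiE_eq_empty_iff)

lemma cube_abs_le: "x \<in> cube d \<Longrightarrow> j < d \<Longrightarrow> \<bar>x j\<bar> \<le> 1"
  unfolding cube_def by (auto simp: PiE_iff)

lemma space_cube_measure: "space (cube_measure d) = cube d"
  by (simp add: cube_measure_def cube_def space_PiM)

lemma nparams_pos:
  assumes "length a \<ge> 2" "\<forall>l<length a. 0 < a!l"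
  shows "0 < nparams a"
proof -
  have "0 < a!1 * a!(1-1) + a!1" and "1 \<in> {1..<length a}" using assms by auto
  then show ?thesis unfolding nparams_def
    by (metis (no_types, lifting) bot_nat_0.not_eq_extremum finite_atLeastLessThan sum_eq_0_iff)
qed

lemma params_abs_le: "\<theta> \<in> params a R \<Longrightarrow> 0 \<le> R \<Longrightarrow> \<bar>\<theta> k\<bar> \<le> R"
  unfolding params_def by (cases "k < nparams a") auto

lemma params_radius_nonneg: "\<theta> \<in> params a R \<Longrightarrow> 0 < nparams a \<Longrightarrow> 0 \<le> R"
  unfolding params_def by force

lemma abs_diff_le_norm_inf:
  assumes "\<theta> \<in> params a R" "\<theta>' \<in> params a R" "0 < nparams a"
  shows "\<bar>\<theta> k - \<theta>' k\<bar> \<le> norm_inf a (\<lambda>i. \<theta> i - \<theta>' i)"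
proof -
  have le: "\<bar>\<theta> i - \<theta>' i\<bar> \<le> norm_inf a (\<lambda>i. \<theta> i - \<theta>' i)" if "i < nparams a" for i
    unfolding norm_inf_def using that by (intro Max_ge) auto
  have "0 \<le> norm_inf a (\<lambda>i. \<theta> i - \<theta>' i)"
    using le[OF assms(3)] abs_ge_zero order_trans by blast
  moreover have "\<theta> k - \<theta>' k = 0" if "\<not> k < nparams a"
    using assms that unfolding params_def by auto
  ultimately show ?thesis using le by (cases "k < nparams a") auto
qed

lemma realize_lipschitz_on_params:
  assumes arch: "length a \<ge> 2" "\<forall>l<length a. 0 < a!l"
    and th: "\<theta> \<in> params a R" "\<theta>' \<in> params a R" and x: "x \<in> cube (a!0)" "x' \<in> cube (a!0)"
    and dx: "\<And>j. j < a!0 \<Longrightarrow> \<bar>x j - x' j\<bar> \<le> \<delta>" and d\<theta>: "\<And>k. \<bar>\<theta> k - \<theta>' k\<bar> \<le> \<delta>"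
  shows "\<bar>realize a \<theta> x - realize a \<theta>' x'\<bar> \<le> realize_lip a R * \<delta>"
proof -
  have R: "0 \<le> R" by (rule params_radius_nonneg[OF th(1) nparams_pos[OF arch]])
  show ?thesis
    by (rule realize_lipschitz[OF arch(1)]) (use th x dx d\<theta> params_abs_le[OF _ R] cube_abs_le in auto)
qed

lemma hidden_measurable:
  "i < a!l \<Longrightarrow> (\<lambda>x. hidden a \<theta> l x i) \<in> borel_measurable (cube_measure (a!0))"
proof (induction l arbitrary: i)
  case 0
  have "(\<lambda>x. x i) \<in> measurable (cube_measure (a!0)) (restrict_space lborel {0..1::real})"
    unfolding cube_measure_def using 0 by (intro measurable_component_singleton) auto
  moreover have "(\<lambda>x. x) \<in> measurable (restrict_space lborel {0..1::real}) borel"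
    by (intro measurable_restrict_space1) simp
  ultimately show ?case using measurable_comp by fastforce
next
  case (Suc l)
  then show ?case
    unfolding hidden.simps affine_layer_def relu_def
    by (intro borel_measurable_max borel_measurable_const borel_measurable_add
        borel_measurable_sum borel_measurable_times) auto
qed

lemma realize_measurable:
  assumes "length a \<ge> 2"
  shows "realize a \<theta> \<in> borel_measurable (cube_measure (a!0))"
proof -
  have L: "length a - 1 = Suc (length a - 2)" using assms by simp
  have "(\<lambda>x. affine_layer a \<theta> (Suc (length a - 2)) (hidden a \<theta> (length a - 2) x) 0)
          \<in> borel_measurable (cube_measure (a!0))"
    unfolding affine_layer_def
    by (cases "0 < a!Suc (length a - 2)")
      (auto intro!: borel_measurable_add borel_measurable_sum borel_measurable_times hidden_measurable)
  then show ?thesis unfolding realize_def L clip1_def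
    by (intro borel_measurable_max borel_measurable_min borel_measurable_const)
qed

subsection \<open>A lower bound for the Lipschitz constant\<close>

lemma layer_off_mono: "m \<le> m' \<Longrightarrow> layer_off a m \<le> layer_off a m'"
  unfolding layer_off_def by (rule sum_mono2) auto

lemma layer_off_Suc: "1 \<le> l \<Longrightarrow> layer_off a (Suc l) = layer_off a l + (a!l * a!(l-1) + a!l)"
  unfolding layer_off_def by (simp add: atLeastLessThanSuc)

lemma hidden_eq_if_prefix_eq:
  "(\<And>k. k < layer_off a (Suc l) \<Longrightarrow> \<theta> k = \<theta>' k) \<Longrightarrow> hidden a \<theta> l x = hidden a \<theta>' l x"
proof (induction l)
  case (Suc l)
  have off: "layer_off a (Suc (Suc l)) = layer_off a (Suc l) + (a!Suc l * a!l + a!Suc l)"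
    using layer_off_Suc[of "Suc l" a] by simp
  have "hidden a \<theta> l x = hidden a \<theta>' l x"
    using Suc layer_off_mono[of "Suc l" "Suc (Suc l)" a] by auto
  moreover have "affine_layer a \<theta> (Suc l) z i = affine_layer a \<theta>' (Suc l) z i" for z i
  proof (cases "i < a!Suc l")
    case True
    have idx: "i * a!l + j < a!Suc l * a!l" if "j < a!l" for j
    proof -
      have "i * a!l + j < Suc i * a!l" using that by simp
      also have "\<dots> \<le> a!Suc l * a!l" using True by (intro mult_right_mono) auto
      finally show ?thesis .
    qed
    then have "\<theta> (layer_off a (Suc l) + i * a!l + j) = \<theta>' (layer_off a (Suc l) + i * a!l + j)"
      if "j < a!l" for j
      by (intro Suc.prems) (use idx[OF that] off in linarith)
    then show ?thesis using True Suc.prems off by (simp add: affine_layer_def)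
  qed (simp add: affine_layer_def)
  ultimately show ?case by simp
qed simp

definition output_bias_index :: "nat list \<Rightarrow> nat" where
  "output_bias_index a = layer_off a (length a - 1) + a!(length a - 1) * a!(length a - 2)"

lemma output_bias_index_less:
  assumes "length a \<ge> 2" "last a = 1"
  shows "output_bias_index a < nparams a"
proof -
  define L where "L = length a - 1"
  have "1 \<le> L" "Suc L = length a" "L - 1 = length a - 2" using assms(1) by (auto simp: L_def)
  moreover have "a!L = 1" using assms last_conv_nth[of a] by (fastforce simp: L_def)
  ultimately show ?thesis
    unfolding output_bias_index_def nparams_def L_def[symmetric]
    using layer_off_Suc[of L a] by (simp add: layer_off_def)
qed

lemma realize_output_bias:
  assumes "length a \<ge> 2" "last a = 1" "\<bar>\<eta>\<bar> \<le> 1"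
  shows "realize a (\<lambda>k. if k = output_bias_index a then \<eta> else 0) x = \<eta>"
proof -
  define L where "L = length a - 1"
  define \<theta> where "\<theta> = (\<lambda>k. if k = output_bias_index a then \<eta> else (0::real))"
  have L: "L = Suc (length a - 2)" "L - 1 = length a - 2" using assms(1) by (auto simp: L_def)
  have aL: "a!L = 1" using assms last_conv_nth[of a] by (fastforce simp: L_def)
  have b: "output_bias_index a = layer_off a L + a!L * a!(L - 1)"
    unfolding output_bias_index_def L(2) by (simp add: L_def)
  have "hidden a \<theta> (length a - 2) x = hidden a (\<lambda>_. 0) (length a - 2) x"
    by (rule hidden_eq_if_prefix_eq) (simp add: \<theta>_def b L(1)[symmetric])
  moreover have "affine_layer a \<theta> L z 0 = \<eta>" for z
    using aL by (simp add: affine_layer_def \<theta>_def b)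
  ultimately show ?thesis
    using assms(3) unfolding \<theta>_def[symmetric] realize_def L_def[symmetric] L(1)
    by (auto simp: clip1_def)
qed

definition Lip_quotients :: "nat list \<Rightarrow> real \<Rightarrow> real set" where
  "Lip_quotients a R = {(SUP x\<in>cube (a!0). \<bar>realize a \<theta> x - realize a \<theta>' x\<bar>) / norm_inf a (\<lambda>i. \<theta> i - \<theta>' i)
       | \<theta> \<theta>'. \<theta> \<in> params a R \<and> \<theta>' \<in> params a R \<and> \<theta> \<noteq> \<theta>'}"

lemma Lip_real_eq_Sup: "Lip_real a R = Sup (Lip_quotients a R)"
  unfolding Lip_real_def Lip_quotients_def ..

lemma Lip_quotients_le:
  assumes arch: "length a \<ge> 2" "\<forall>l<length a. 0 < a!l" and s: "s \<in> Lip_quotients a R"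
  shows "s \<le> realize_lip a R"
proof -
  obtain \<theta> \<theta>' where th: "\<theta> \<in> params a R" "\<theta>' \<in> params a R" "\<theta> \<noteq> \<theta>'" and
    s: "s = (SUP x\<in>cube (a!0). \<bar>realize a \<theta> x - realize a \<theta>' x\<bar>) / norm_inf a (\<lambda>i. \<theta> i - \<theta>' i)"
    using s unfolding Lip_quotients_def by blast
  define \<delta> where "\<delta> = norm_inf a (\<lambda>i. \<theta> i - \<theta>' i)"
  have d\<theta>: "\<bar>\<theta> k - \<theta>' k\<bar> \<le> \<delta>" for k
    unfolding \<delta>_def by (rule abs_diff_le_norm_inf[OF th(1,2) nparams_pos[OF arch]])
  obtain k where "\<theta> k \<noteq> \<theta>' k" using th(3) by auto
  with d\<theta>[of k] have \<delta>: "0 < \<delta>" by linarith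
  have "(SUP x\<in>cube (a!0). \<bar>realize a \<theta> x - realize a \<theta>' x\<bar>) \<le> realize_lip a R * \<delta>"
    by (rule cSUP_least[OF cube_nonempty] realize_lipschitz_on_params[OF arch th(1,2)])+
      (use d\<theta> \<delta> in auto)
  then show ?thesis unfolding s \<delta>_def[symmetric] using \<delta> by (simp add: divide_le_eq)
qed

text \<open>The output bias alone moves the (constant) realization by exactly its own size.\<close>

lemma Lip_real_ge_1:
  assumes arch: "length a \<ge> 2" "\<forall>l<length a. 0 < a!l" "last a = 1" and R: "0 < R"
  shows "1 \<le> Lip_real a R"
proof -
  define \<eta> where "\<eta> = min R 1"
  have \<eta>: "0 < \<eta>" "\<eta> \<le> R" "\<eta> \<le> 1" using R by (auto simp: \<eta>_def)
  define \<theta>0 :: "nat \<Rightarrow> real" where "\<theta>0 = (\<lambda>_. 0)"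
  define \<theta>1 :: "nat \<Rightarrow> real" where "\<theta>1 = (\<lambda>k. if k = output_bias_index a then \<eta> else 0)"
  have b: "output_bias_index a < nparams a" by (rule output_bias_index_less[OF arch(1,3)])
  have params: "\<theta>0 \<in> params a R" "\<theta>1 \<in> params a R" "\<theta>0 \<noteq> \<theta>1"
    using R \<eta> b by (auto simp: params_def \<theta>0_def \<theta>1_def fun_eq_iff)
  have "realize a \<theta>0 x = 0" "realize a \<theta>1 x = \<eta>" for x
    using realize_output_bias[OF arch(1,3), of 0] realize_output_bias[OF arch(1,3), of \<eta>] \<eta>
    by (simp_all add: \<theta>0_def \<theta>1_def)
  then have "(SUP x\<in>cube (a!0). \<bar>realize a \<theta>0 x - realize a \<theta>1 x\<bar>) = \<eta>"
    using \<eta> by (simp add: cube_nonempty)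
  moreover have "norm_inf a (\<lambda>i. \<theta>0 i - \<theta>1 i) = \<eta>"
    unfolding norm_inf_def using b \<eta>
    by (intro Max_eqI) (auto simp: \<theta>0_def \<theta>1_def image_iff intro!: bexI[of _ "output_bias_index a"])
  ultimately have "1 \<in> Lip_quotients a R"
    unfolding Lip_quotients_def using params \<eta> by force
  moreover have "bdd_above (Lip_quotients a R)"
    using Lip_quotients_le[OF arch(1,2)] by (auto simp: bdd_above_def)
  ultimately show ?thesis unfolding Lip_real_eq_Sup by (rule cSup_upper)
qed

subsection \<open>From almost everywhere to everywhere on the cube\<close>

lemma unit_interval_product_sigma_finite:
  "product_sigma_finite (\<lambda>_::nat. restrict_space lborel {0..1::real})"
proof -
  have "prob_space (restrict_space lborel {0..1::real})" by (rule prob_space_restrict_space) auto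
  then show ?thesis unfolding product_sigma_finite_def using prob_space_imp_sigma_finite by blast
qed

lemma cube_box_positive_measure:
  assumes x0: "x0 \<in> cube d" and \<eta>: "0 < \<eta>"
  defines "U \<equiv> PiE {..<d} (\<lambda>j. {max 0 (x0 j - \<eta>) .. min 1 (x0 j + \<eta>)})"
  shows "U \<in> sets (cube_measure d)" and "emeasure (cube_measure d) U \<noteq> 0"
proof -
  interpret product_sigma_finite "\<lambda>_::nat. restrict_space lborel {0..1::real}"
    by (rule unit_interval_product_sigma_finite)
  let ?I = "\<lambda>j. {max 0 (x0 j - \<eta>) .. min 1 (x0 j + \<eta>)}"
  have x0j: "x0 j \<in> {0..1}" if "j < d" for j using x0 that by (auto simp: cube_def PiE_iff)
  have sets: "?I j \<in> sets (restrict_space lborel {0..1::real})" for j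
    by (simp add: sets_restrict_space_iff)
  show "U \<in> sets (cube_measure d)" unfolding U_def cube_measure_def
    by (rule sets_PiM_I_finite) (use sets in auto)
  have "emeasure (cube_measure d) U = (\<Prod>j<d. emeasure (restrict_space lborel {0..1::real}) (?I j))"
    unfolding U_def cube_measure_def by (rule emeasure_PiM) (use sets in auto)
  also have "\<dots> = (\<Prod>j<d. ennreal (min 1 (x0 j + \<eta>) - max 0 (x0 j - \<eta>)))"
  proof (intro prod.cong refl)
    fix j assume "j \<in> {..<d}"
    then have "max 0 (x0 j - \<eta>) \<le> min 1 (x0 j + \<eta>)" using x0j[of j] \<eta> by auto
    then show "emeasure (restrict_space lborel {0..1}) (?I j) = ennreal (min 1 (x0 j + \<eta>) - max 0 (x0 j - \<eta>))"
      by (simp add: emeasure_restrict_space)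
  qed
  also have "\<dots> \<noteq> 0"
  proof -
    have "0 < min 1 (x0 j + \<eta>) - max 0 (x0 j - \<eta>)" if "j < d" for j using x0j[OF that] \<eta> by auto
    then show ?thesis by (simp add: ennreal_eq_0_iff not_le)
  qed
  finally show "emeasure (cube_measure d) U \<noteq> 0" .
qed

lemma AE_le_imp_le_on_cube:
  fixes h :: "(nat \<Rightarrow> real) \<Rightarrow> real"
  assumes lip: "\<And>x x' \<delta>. x \<in> cube d \<Longrightarrow> x' \<in> cube d \<Longrightarrow> (\<And>j. j < d \<Longrightarrow> \<bar>x j - x' j\<bar> \<le> \<delta>)
      \<Longrightarrow> \<bar>h x - h x'\<bar> \<le> L * \<delta>"
    and L: "0 \<le> L" and ae: "AE x in cube_measure d. h x \<le> c" and x0: "x0 \<in> cube d"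
  shows "h x0 \<le> c"
proof (rule ccontr)
  assume "\<not> h x0 \<le> c"
  define \<eta> where "\<eta> = (h x0 - c) / (2 * (L + 1))"
  have \<eta>: "0 < \<eta>" using \<open>\<not> h x0 \<le> c\<close> L by (simp add: \<eta>_def)
  have "L * \<eta> \<le> (L + 1) * \<eta>" using \<eta> by simp
  also have "\<dots> = (h x0 - c) / 2" using L by (simp add: \<eta>_def field_simps)
  also have "\<dots> < h x0 - c" using \<open>\<not> h x0 \<le> c\<close> by simp
  finally have L\<eta>: "L * \<eta> < h x0 - c" .
  define U where "U = PiE {..<d} (\<lambda>j. {max 0 (x0 j - \<eta>) .. min 1 (x0 j + \<eta>)})"
  have U: "U \<in> sets (cube_measure d)" "emeasure (cube_measure d) U \<noteq> 0"
    using cube_box_positive_measure[OF x0 \<eta>] unfolding U_def by auto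
  have "U \<subseteq> {x \<in> space (cube_measure d). \<not> h x \<le> c}"
  proof
    fix x assume "x \<in> U"
    then have x: "x \<in> cube d" unfolding U_def cube_def by (auto simp: PiE_iff)
    have "\<bar>x j - x0 j\<bar> \<le> \<eta>" if "j < d" for j
    proof -
      have "x j \<in> {max 0 (x0 j - \<eta>) .. min 1 (x0 j + \<eta>)}"
        using \<open>x \<in> U\<close> that unfolding U_def by (auto simp: PiE_iff)
      then show ?thesis by (auto simp: abs_le_iff)
    qed
    then have "\<bar>h x - h x0\<bar> \<le> L * \<eta>" by (rule lip[OF x x0])
    then show "x \<in> {x \<in> space (cube_measure d). \<not> h x \<le> c}"
      using L\<eta> x by (auto simp: space_cube_measure)
  qed
  moreover obtain N where "{x \<in> space (cube_measure d). \<not> h x \<le> c} \<subseteq> N"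
    "N \<in> sets (cube_measure d)" "emeasure (cube_measure d) N = 0"
    using ae by (auto elim: AE_E)
  ultimately have "emeasure (cube_measure d) U \<le> emeasure (cube_measure d) N"
    by (intro emeasure_mono) auto
  then show False using U \<open>emeasure (cube_measure d) N = 0\<close> by simp
qed

lemma AE_le_of_esssup_restrict:
  assumes "esssup (cube_measure d) (\<lambda>x. ereal \<bar>restrict f (cube d) x - g x\<bar>) \<le> ereal e"
  shows "AE x in cube_measure d. \<bar>f x - g x\<bar> \<le> e"
  using esssup_AE[of "\<lambda>x. ereal \<bar>restrict f (cube d) x - g x\<bar>" "cube_measure d"] AE_space
proof eventually_elim
  case (elim x)
  then show ?case using assms by (auto simp: space_cube_measure dest: order_trans)
qed

lemma realize_close_everywhere_of_AE:
  assumes arch: "length a \<ge> 2" "\<forall>l<length a. 0 < a!l" and \<theta>: "\<theta> \<in> params a R" "\<theta>' \<in> params a R"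
    and ae: "AE x in cube_measure (a!0). \<bar>realize a \<theta> x - realize a \<theta>' x\<bar> \<le> c" and x: "x \<in> cube (a!0)"
  shows "\<bar>realize a \<theta> x - realize a \<theta>' x\<bar> \<le> c"
proof (rule AE_le_imp_le_on_cube[OF _ _ ae x])
  fix y y' \<delta> assume y: "y \<in> cube (a!0)" "y' \<in> cube (a!0)" and dy: "\<And>i. i < a!0 \<Longrightarrow> \<bar>y i - y' i\<bar> \<le> \<delta>"
  have "0 < a!0" using arch(1) by (intro arch(2)[rule_format]) linarith
  then have \<delta>: "0 \<le> \<delta>" using dy[of 0] abs_ge_zero[of "y 0 - y' 0"] by linarith
  have "\<bar>realize a \<psi> y - realize a \<psi> y'\<bar> \<le> realize_lip a R * \<delta>" if "\<psi> \<in> params a R" for \<psi>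
    using that y dy \<delta> by (intro realize_lipschitz_on_params[OF arch]) auto
  from this[OF \<theta>(1)] this[OF \<theta>(2)]
  show "\<bar>\<bar>realize a \<theta> y - realize a \<theta>' y\<bar> - \<bar>realize a \<theta> y' - realize a \<theta>' y'\<bar>\<bar> \<le> 2 * realize_lip a R * \<delta>"
    by linarith
next
  have "0 \<le> R" by (rule params_radius_nonneg[OF \<theta>(1) nparams_pos[OF arch]])
  then show "0 \<le> 2 * realize_lip a R" using realize_lip_ge_1[of R a] by linarith
qed

subsection \<open>Covering the network class\<close>

lemma params_eq_PiE: "params a R = PiE UNIV (\<lambda>i. if i < nparams a then {-R..R} else {0})"
proof -
  have "\<theta> \<in> params a R \<longleftrightarrow> (\<forall>i. \<theta> i \<in> (if i < nparams a then {-R..R} else {0}))" for \<theta>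
    unfolding params_def by (simp add: abs_le_iff minus_le_iff not_less) blast
  then show ?thesis by (auto simp: PiE_iff)
qed

lemma params_compact: "compact (params a R)"
proof -
  have "compactin (product_topology (\<lambda>_. euclidean) UNIV) (params a R)"
    unfolding params_eq_PiE compactin_PiE by auto
  then show ?thesis by (simp add: euclidean_product_topology)
qed

lemma params_finite_net:
  assumes "0 < \<eta>"
  obtains \<Phi> where "finite \<Phi>" "\<Phi> \<subseteq> params a R"
    "\<And>\<theta>. \<theta> \<in> params a R \<Longrightarrow> \<exists>\<phi>\<in>\<Phi>. \<forall>k. \<bar>\<theta> k - \<phi> k\<bar> \<le> \<eta>"
proof -
  define B where "B \<phi> = (\<Inter>k<nparams a. {\<theta>::nat \<Rightarrow> real. \<bar>\<theta> k - \<phi> k\<bar> < \<eta>})" for \<phi>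
  have "open (B \<phi>)" for \<phi>
    unfolding B_def by (intro open_INT finite_lessThan ballI open_Collect_less continuous_intros) auto
  moreover have "params a R \<subseteq> (\<Union>\<phi>\<in>params a R. B \<phi>)"
    using assms by (auto simp: B_def)
  ultimately obtain \<Phi> where \<Phi>: "\<Phi> \<subseteq> params a R" "finite \<Phi>" "params a R \<subseteq> (\<Union>\<phi>\<in>\<Phi>. B \<phi>)"
    by (rule compactE_image[OF params_compact])
  have "\<exists>\<phi>\<in>\<Phi>. \<forall>k. \<bar>\<theta> k - \<phi> k\<bar> \<le> \<eta>" if \<theta>: "\<theta> \<in> params a R" for \<theta>
  proof -
    obtain \<phi> where "\<phi> \<in> \<Phi>" "\<theta> \<in> B \<phi>" using \<Phi>(3) \<theta> by blast
    moreover have "\<theta> k - \<phi> k = 0" if "\<not> k < nparams a" for k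
      using \<theta> \<Phi>(1) \<open>\<phi> \<in> \<Phi>\<close> that by (auto simp: params_def)
    moreover have "\<bar>\<theta> k - \<phi> k\<bar> < \<eta>" if "k < nparams a" for k
      using \<open>\<theta> \<in> B \<phi>\<close> that by (auto simp: B_def)
    ultimately show ?thesis using assms by (metis abs_zero less_imp_le)
  qed
  with \<Phi> show thesis using that by blast
qed

definition Linf_cover :: "nat list \<Rightarrow> real \<Rightarrow> real \<Rightarrow> nat \<Rightarrow> bool" where
  "Linf_cover a R \<epsilon> N \<longleftrightarrow> (\<exists>g :: nat \<Rightarrow> (nat \<Rightarrow> real) \<Rightarrow> real.
      (\<forall>j<N. g j \<in> borel_measurable (cube_measure (a!0))
             \<and> esssup (cube_measure (a!0)) (\<lambda>x. ereal \<bar>g j x\<bar>) < \<infinity>)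
    \<and> (\<forall>f\<in>NN a R. \<exists>j<N. esssup (cube_measure (a!0)) (\<lambda>x. ereal \<bar>f x - g j x\<bar>) \<le> ereal \<epsilon>))"

lemma Cov_inf_eq_Least: "Cov_inf a R \<epsilon> = (LEAST N. Linf_cover a R \<epsilon> N)"
  unfolding Cov_inf_def Linf_cover_def ..

lemma esssup_le_of_bound:
  assumes "f \<in> borel_measurable M" "\<And>x. x \<in> space M \<Longrightarrow> \<bar>f x\<bar> \<le> c"
  shows "esssup M (\<lambda>x. ereal \<bar>f x\<bar>) \<le> ereal c"
  using assms by (intro esssup_I AE_I2) auto

lemma Linf_cover_exists:
  assumes arch: "length a \<ge> 2" "\<forall>l<length a. 0 < a!l" and R: "0 \<le> R" and \<epsilon>: "0 < \<epsilon>"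
  shows "\<exists>N. Linf_cover a R \<epsilon> N"
proof -
  have LC: "1 \<le> realize_lip a R" by (rule realize_lip_ge_1[OF R])
  then have "0 < \<epsilon> / realize_lip a R" using \<epsilon> by simp
  then obtain \<Phi> where \<Phi>: "finite \<Phi>" "\<Phi> \<subseteq> params a R"
    and net: "\<And>\<theta>. \<theta> \<in> params a R \<Longrightarrow> \<exists>\<phi>\<in>\<Phi>. \<forall>k. \<bar>\<theta> k - \<phi> k\<bar> \<le> \<epsilon> / realize_lip a R"
    using params_finite_net[where a=a and R=R] by blast
  obtain N :: nat and h where enum: "\<Phi> = h ` {i. i < N}"
    using finite_imp_nat_seg_image_inj_on[OF \<Phi>(1)] by blast
  define g where "g j = realize a (h j)" for j
  have meas: "g j \<in> borel_measurable (cube_measure (a!0))" for j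
    unfolding g_def by (rule realize_measurable[OF arch(1)])
  have "esssup (cube_measure (a!0)) (\<lambda>x. ereal \<bar>g j x\<bar>) \<le> ereal 1" for j
    by (rule esssup_le_of_bound[OF meas]) (simp add: g_def realize_abs_le)
  then have finite: "esssup (cube_measure (a!0)) (\<lambda>x. ereal \<bar>g j x\<bar>) < \<infinity>" for j
    by (rule order.strict_trans1) simp
  have "\<exists>j<N. esssup (cube_measure (a!0)) (\<lambda>x. ereal \<bar>f x - g j x\<bar>) \<le> ereal \<epsilon>" if "f \<in> NN a R" for f
  proof -
    obtain \<theta> where \<theta>: "\<theta> \<in> params a R" and f: "f = restrict (realize a \<theta>) (cube (a!0))"
      using \<open>f \<in> NN a R\<close> unfolding NN_def by auto
    obtain j where j: "j < N" and close: "\<forall>k. \<bar>\<theta> k - h j k\<bar> \<le> \<epsilon> / realize_lip a R"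
      using net[OF \<theta>] enum by auto
    have meas_fg: "(\<lambda>x. f x - g j x) \<in> borel_measurable (cube_measure (a!0))"
      unfolding f using realize_measurable[OF arch(1)] meas
      by (subst measurable_cong[where g="\<lambda>x. realize a \<theta> x - g j x"]) (auto simp: space_cube_measure)
    have "esssup (cube_measure (a!0)) (\<lambda>x. ereal \<bar>f x - g j x\<bar>) \<le> ereal \<epsilon>"
    proof (rule esssup_le_of_bound[OF meas_fg])
      fix x assume "x \<in> space (cube_measure (a!0))"
      then have x: "x \<in> cube (a!0)" by (simp add: space_cube_measure)
      have "\<bar>realize a \<theta> x - realize a (h j) x\<bar> \<le> realize_lip a R * (\<epsilon> / realize_lip a R)"
        using \<Phi>(2) enum j close \<epsilon> LC
        by (intro realize_lipschitz_on_params[OF arch \<theta> _ x x]) auto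
      then show "\<bar>f x - g j x\<bar> \<le> \<epsilon>" using x LC by (simp add: f g_def)
    qed
    then show ?thesis using j by blast
  qed
  then show ?thesis unfolding Linf_cover_def using meas finite by (intro exI[of _ N] exI[of _ g]) blast
qed

text \<open>The centres of an \<open>L\<^sup>\<infinity>\<close>-cover need not be networks; replacing each centre by a network
  within distance \<open>\<epsilon>\<close> of it doubles the radius.  Since networks are continuous, closeness
  almost everywhere is closeness everywhere on the cube.\<close>

lemma realization_net:
  assumes arch: "length a \<ge> 2" "\<forall>l<length a. 0 < a!l" and \<epsilon>: "0 < \<epsilon>" and ne: "params a R \<noteq> {}"
  obtains \<Phi> where "finite \<Phi>" "\<Phi> \<noteq> {}" "\<Phi> \<subseteq> params a R" "card \<Phi> \<le> Cov_inf a R \<epsilon>"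
    "\<And>\<theta>. \<theta> \<in> params a R \<Longrightarrow> \<exists>\<phi>\<in>\<Phi>. \<forall>x\<in>cube (a!0). \<bar>realize a \<theta> x - realize a \<phi> x\<bar> \<le> 2 * \<epsilon>"
proof -
  define N where "N = Cov_inf a R \<epsilon>"
  obtain \<theta>0 where "\<theta>0 \<in> params a R" using ne by blast
  then have R: "0 \<le> R" using params_radius_nonneg nparams_pos[OF arch] by blast
  have "Linf_cover a R \<epsilon> N"
    unfolding N_def Cov_inf_eq_Least by (rule LeastI_ex[OF Linf_cover_exists[OF arch R \<epsilon>]])
  then obtain g where cover: "\<forall>f\<in>NN a R.
      \<exists>j<N. esssup (cube_measure (a!0)) (\<lambda>x. ereal \<bar>f x - g j x\<bar>) \<le> ereal \<epsilon>"
    unfolding Linf_cover_def by auto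
  define close where "close \<theta> j \<longleftrightarrow>
    esssup (cube_measure (a!0)) (\<lambda>x. ereal \<bar>restrict (realize a \<theta>) (cube (a!0)) x - g j x\<bar>) \<le> ereal \<epsilon>"
    for \<theta> j
  define J where "J = {j. j < N \<and> (\<exists>\<theta>\<in>params a R. close \<theta> j)}"
  define rep where "rep j = (SOME \<theta>. \<theta> \<in> params a R \<and> close \<theta> j)" for j
  have rep: "rep j \<in> params a R \<and> close (rep j) j" if "j \<in> J" for j
  proof -
    have "\<exists>\<theta>. \<theta> \<in> params a R \<and> close \<theta> j" using that by (auto simp: J_def)
    then show ?thesis unfolding rep_def by (rule someI_ex)
  qed
  have cardJ: "card J \<le> N" unfolding J_def by (rule card_mono[of "{..<N}", simplified]) auto
  have net: "\<exists>\<phi>\<in>rep ` J. \<forall>x\<in>cube (a!0). \<bar>realize a \<theta> x - realize a \<phi> x\<bar> \<le> 2 * \<epsilon>"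
    if \<theta>: "\<theta> \<in> params a R" for \<theta>
  proof -
    have "restrict (realize a \<theta>) (cube (a!0)) \<in> NN a R" using \<theta> unfolding NN_def by blast
    then obtain j where "j < N" "close \<theta> j" using cover unfolding close_def by blast
    then have j: "j \<in> J" using \<theta> by (auto simp: J_def)
    have "AE x in cube_measure (a!0). \<bar>realize a \<theta> x - g j x\<bar> \<le> \<epsilon>"
      by (rule AE_le_of_esssup_restrict) (use \<open>close \<theta> j\<close> in \<open>simp add: close_def\<close>)
    moreover have "AE x in cube_measure (a!0). \<bar>realize a (rep j) x - g j x\<bar> \<le> \<epsilon>"
      by (rule AE_le_of_esssup_restrict) (use rep[OF j] in \<open>simp add: close_def\<close>)
    ultimately have ae: "AE x in cube_measure (a!0). \<bar>realize a \<theta> x - realize a (rep j) x\<bar> \<le> 2 * \<epsilon>"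
      by eventually_elim auto
    have "\<forall>x\<in>cube (a!0). \<bar>realize a \<theta> x - realize a (rep j) x\<bar> \<le> 2 * \<epsilon>"
      using realize_close_everywhere_of_AE[OF arch \<theta> conjunct1[OF rep[OF j]] ae] by blast
    then show ?thesis using j by blast
  qed
  show thesis
  proof (rule that[of "rep ` J"])
    show "finite (rep ` J)" by (simp add: J_def)
    show "rep ` J \<noteq> {}" using net[OF \<open>\<theta>0 \<in> params a R\<close>] by auto
    show "rep ` J \<subseteq> params a R" using rep by auto
    have "card (rep ` J) \<le> card J" by (rule card_image_le) (simp add: J_def)
    then show "card (rep ` J) \<le> Cov_inf a R \<epsilon>" using cardJ by (simp add: N_def)
  qed (use net in blast)
qed

subsection \<open>Squared loss and risks\<close>

definition sq_loss :: "nat list \<Rightarrow> (nat \<Rightarrow> real) \<Rightarrow> (nat \<Rightarrow> real) \<times> real \<Rightarrow> real" where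
  "sq_loss a \<theta> w = (realize a \<theta> (fst w) - snd w)\<^sup>2"

lemma pop_risk_eq: "pop_risk a p lam \<rho> \<theta> = (\<integral>w. sq_loss a \<theta> w \<partial>\<rho>) + lam / 2 * norm_pp a p \<theta>"
  unfolding pop_risk_def sq_loss_def ..

lemma emp_risk_eq:
  "emp_risk a p lam n z \<theta> = (\<Sum>i<n. sq_loss a \<theta> (z i)) / real n + lam / 2 * norm_pp a p \<theta>"
  unfolding emp_risk_def sq_loss_def by simp

lemma sq_loss_bounds: "\<bar>snd w\<bar> \<le> 1 \<Longrightarrow> 0 \<le> sq_loss a \<theta> w \<and> sq_loss a \<theta> w \<le> 4"
proof -
  assume "\<bar>snd w\<bar> \<le> 1"
  then have "\<bar>realize a \<theta> (fst w) - snd w\<bar> \<le> 2" using realize_abs_le[of a \<theta> "fst w"] by linarith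
  then have "\<bar>realize a \<theta> (fst w) - snd w\<bar>\<^sup>2 \<le> 2\<^sup>2" by (intro power_mono) auto
  then show ?thesis by (simp add: sq_loss_def)
qed

lemma sq_loss_diff_le:
  assumes "\<bar>snd w\<bar> \<le> 1"
  shows "\<bar>sq_loss a \<theta> w - sq_loss a \<theta>' w\<bar> \<le> 4 * \<bar>realize a \<theta> (fst w) - realize a \<theta>' (fst w)\<bar>"
proof -
  let ?u = "realize a \<theta> (fst w)" and ?v = "realize a \<theta>' (fst w)"
  have "sq_loss a \<theta> w - sq_loss a \<theta>' w = (?u - ?v) * (?u + ?v - 2 * snd w)"
    by (simp add: sq_loss_def power2_eq_square algebra_simps)
  then have "\<bar>sq_loss a \<theta> w - sq_loss a \<theta>' w\<bar> = \<bar>?u - ?v\<bar> * \<bar>?u + ?v - 2 * snd w\<bar>"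
    by (simp add: abs_mult)
  also have "\<dots> \<le> \<bar>?u - ?v\<bar> * 4"
    using assms realize_abs_le[of a \<theta> "fst w"] realize_abs_le[of a \<theta>' "fst w"]
    by (intro mult_left_mono) auto
  finally show ?thesis by simp
qed

lemma sample_point_in_cube:
  assumes "sets \<rho> = sets (cube_measure d \<Otimes>\<^sub>M count_space {-1, 1::real})" "w \<in> space \<rho>"
  shows "fst w \<in> cube d" and "\<bar>snd w\<bar> \<le> 1"
proof -
  have "space \<rho> = cube d \<times> {-1, 1}"
    using sets_eq_imp_space_eq[OF assms(1)] by (simp add: space_pair_measure space_cube_measure)
  then show "fst w \<in> cube d" "\<bar>snd w\<bar> \<le> 1" using assms(2) by auto
qed

lemma sq_loss_measurable:
  assumes "length a \<ge> 2" "a!0 = d" "sets \<rho> = sets (cube_measure d \<Otimes>\<^sub>M count_space {-1, 1::real})"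
  shows "sq_loss a \<theta> \<in> borel_measurable \<rho>"
proof -
  have "realize a \<theta> \<in> borel_measurable (cube_measure d)"
    using realize_measurable[OF assms(1)] assms(2) by simp
  then have fst_part: "(\<lambda>w. realize a \<theta> (fst w)) \<in> borel_measurable (cube_measure d \<Otimes>\<^sub>M count_space {-1, 1})"
    by measurable
  have "(\<lambda>y::real. y) \<in> borel_measurable (count_space {-1, 1})" by simp
  from measurable_compose[OF measurable_snd this]
  have snd_part: "(\<lambda>w. snd w) \<in> borel_measurable (cube_measure d \<Otimes>\<^sub>M count_space {-1, 1::real})"
    by (metis (no_types))
  show ?thesis unfolding sq_loss_def measurable_cong_sets[OF assms(3) refl]
    using fst_part snd_part by (intro borel_measurable_power borel_measurable_diff)
qed

lemma (in prob_space) integral_diff_le: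
  fixes f g :: "'a \<Rightarrow> real"
  assumes "f \<in> borel_measurable M" "g \<in> borel_measurable M"
    and "\<And>x. x \<in> space M \<Longrightarrow> \<bar>f x\<bar> \<le> B" "\<And>x. x \<in> space M \<Longrightarrow> \<bar>g x\<bar> \<le> B"
    and "\<And>x. x \<in> space M \<Longrightarrow> \<bar>f x - g x\<bar> \<le> c"
  shows "\<bar>(\<integral>x. f x \<partial>M) - (\<integral>x. g x \<partial>M)\<bar> \<le> c"
proof -
  have "integrable M f" "integrable M g"
    by (rule integrable_const_bound[where B=B]; use assms in auto)+
  moreover from this have "(\<integral>x. f x - g x \<partial>M) \<le> c" "-c \<le> (\<integral>x. f x - g x \<partial>M)"
    by (intro integral_le_const integral_ge_const AE_I2;
        use assms(5) in \<open>force simp: abs_le_iff\<close>)+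
  ultimately show ?thesis by (simp add: abs_le_iff)
qed

context
  fixes a :: "nat list" and d :: nat and \<rho> :: "((nat \<Rightarrow> real) \<times> real) measure"
  assumes len: "length a \<ge> 2" and input_dim: "a!0 = d"
    and rho: "prob_space \<rho>" "sets \<rho> = sets (cube_measure d \<Otimes>\<^sub>M count_space {-1, 1::real})"
begin

lemma expected_sq_loss_diff_le:
  assumes "\<And>x. x \<in> cube d \<Longrightarrow> \<bar>realize a \<theta> x - realize a \<theta>' x\<bar> \<le> c"
  shows "\<bar>(\<integral>w. sq_loss a \<theta> w \<partial>\<rho>) - (\<integral>w. sq_loss a \<theta>' w \<partial>\<rho>)\<bar> \<le> 4 * c"
proof -
  interpret prob_space \<rho> by (rule rho(1))
  show ?thesis
  proof (rule integral_diff_le[where B=4])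
    fix w assume w: "w \<in> space \<rho>"
    note pt = sample_point_in_cube[OF rho(2) w]
    show "\<bar>sq_loss a \<theta> w\<bar> \<le> 4" "\<bar>sq_loss a \<theta>' w\<bar> \<le> 4" using sq_loss_bounds[OF pt(2)] by auto
    show "\<bar>sq_loss a \<theta> w - sq_loss a \<theta>' w\<bar> \<le> 4 * c"
      using sq_loss_diff_le[OF pt(2)] assms[OF pt(1)] by (smt (verit) mult_left_mono)
  qed (use sq_loss_measurable[OF len input_dim rho(2)] in auto)
qed

lemma sample_sq_loss_diff_le:
  assumes "\<And>x. x \<in> cube d \<Longrightarrow> \<bar>realize a \<theta> x - realize a \<theta>' x\<bar> \<le> c"
    and "\<And>i. i < n \<Longrightarrow> z i \<in> space \<rho>"
  shows "\<bar>(\<Sum>i<n. sq_loss a \<theta> (z i)) - (\<Sum>i<n. sq_loss a \<theta>' (z i))\<bar> \<le> real n * (4 * c)"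
proof -
  have "\<bar>sq_loss a \<theta> (z i) - sq_loss a \<theta>' (z i)\<bar> \<le> 4 * c" if "i < n" for i
    using sq_loss_diff_le[OF sample_point_in_cube(2)[OF rho(2) assms(2)]]
      assms(1)[OF sample_point_in_cube(1)[OF rho(2) assms(2)]] that
    by (smt (verit) mult_left_mono)
  then have "(\<Sum>i<n. \<bar>sq_loss a \<theta> (z i) - sq_loss a \<theta>' (z i)\<bar>) \<le> real n * (4 * c)"
    using sum_mono[of "{..<n}" _ "\<lambda>_. 4 * c"] by simp
  then show ?thesis by (metis (no_types) order_trans sum_abs sum_subtractf)
qed

lemma expected_sq_loss_continuous:
  assumes arch: "\<forall>l<length a. 0 < a!l"
  shows "continuous_on (params a R) (\<lambda>\<theta>. \<integral>w. sq_loss a \<theta> w \<partial>\<rho>)"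
  unfolding continuous_on_def
proof
  fix \<theta> assume \<theta>: "\<theta> \<in> params a R"
  define B where "B \<phi> = 4 * (realize_lip a R * (\<Sum>i<nparams a. \<bar>\<phi> i - \<theta> i\<bar>))" for \<phi> :: "nat \<Rightarrow> real"
  have "((\<lambda>\<phi>::nat \<Rightarrow> real. \<phi> i) \<longlongrightarrow> \<theta> i) (at \<theta> within params a R)" for i
  proof -
    have "continuous_on UNIV (\<lambda>\<phi>::nat \<Rightarrow> real. \<phi> i)" by simp
    then have "((\<lambda>\<phi>::nat \<Rightarrow> real. \<phi> i) \<longlongrightarrow> \<theta> i) (at \<theta>)" by (simp add: continuous_on_def)
    then show ?thesis by (rule tendsto_within_subset) simp
  qed
  then have "(B \<longlongrightarrow> B \<theta>) (at \<theta> within params a R)"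
    unfolding B_def by (intro tendsto_intros)
  then have B0: "(B \<longlongrightarrow> 0) (at \<theta> within params a R)" by (simp add: B_def)
  have "\<bar>(\<integral>w. sq_loss a \<phi> w \<partial>\<rho>) - (\<integral>w. sq_loss a \<theta> w \<partial>\<rho>)\<bar> \<le> B \<phi>" if \<phi>: "\<phi> \<in> params a R" for \<phi>
  proof (unfold B_def, rule expected_sq_loss_diff_le)
    fix x assume x: "x \<in> cube d"
    have "\<bar>\<phi> k - \<theta> k\<bar> \<le> (\<Sum>i<nparams a. \<bar>\<phi> i - \<theta> i\<bar>)" for k
      using \<phi> \<theta> by (cases "k < nparams a")
        (auto simp: params_def intro: member_le_sum[where f="\<lambda>i. \<bar>\<phi> i - \<theta> i\<bar>"] sum_nonneg)
    moreover have "0 \<le> (\<Sum>i<nparams a. \<bar>\<phi> i - \<theta> i\<bar>)" by (simp add: sum_nonneg)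
    ultimately show "\<bar>realize a \<phi> x - realize a \<theta> x\<bar> \<le> realize_lip a R * (\<Sum>i<nparams a. \<bar>\<phi> i - \<theta> i\<bar>)"
      using x input_dim by (intro realize_lipschitz_on_params[OF len arch \<phi> \<theta>]) auto
  qed
  then have "((\<lambda>\<phi>. (\<integral>w. sq_loss a \<phi> w \<partial>\<rho>) - (\<integral>w. sq_loss a \<theta> w \<partial>\<rho>)) \<longlongrightarrow> 0) (at \<theta> within params a R)"
    by (intro Lim_null_comparison[OF _ B0]) (auto simp: eventually_at_filter)
  then show "((\<lambda>\<phi>. \<integral>w. sq_loss a \<phi> w \<partial>\<rho>) \<longlongrightarrow> (\<integral>w. sq_loss a \<theta> w \<partial>\<rho>)) (at \<theta> within params a R)"
    by (simp add: LIM_zero_iff)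
qed

end

lemma norm_pp_continuous:
  assumes "0 < p"
  shows "continuous_on S (norm_pp a p)"
proof -
  have "continuous_on S (\<lambda>\<theta>::nat \<Rightarrow> real. \<theta> i)" for i
    by (rule continuous_on_subset[of UNIV]) simp_all
  then show ?thesis unfolding norm_pp_def
    using assms by (intro continuous_on_sum continuous_on_powr' continuous_intros) auto
qed

lemma argmin_pop_risk_nonempty:
  assumes arch: "length a \<ge> 2" "\<forall>l<length a. 0 < a!l" "a!0 = d"
    and rho: "prob_space \<rho>" "sets \<rho> = sets (cube_measure d \<Otimes>\<^sub>M count_space {-1, 1::real})"
    and "0 < p" and "params a R \<noteq> {}"
  shows "argmin_on (params a R) (pop_risk a p lam \<rho>) \<noteq> {}"
proof -
  have "continuous_on (params a R) (pop_risk a p lam \<rho>)"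
    unfolding pop_risk_eq[abs_def]
    by (intro continuous_on_add continuous_on_mult_left expected_sq_loss_continuous[OF arch(1,3) rho arch(2)]
        norm_pp_continuous \<open>0 < p\<close>)
  then show ?thesis
    using continuous_attains_inf[OF params_compact \<open>params a R \<noteq> {}\<close>] unfolding argmin_on_def by blast
qed

subsection \<open>Concentration of the empirical loss\<close>

lemma indep_vars_PiM_components:
  assumes "prob_space \<rho>" and "I \<noteq> {}"
  shows "prob_space.indep_vars (PiM I (\<lambda>_. \<rho>)) (\<lambda>_. \<rho>) (\<lambda>i z. z i) I"
proof -
  let ?M = "PiM I (\<lambda>_. \<rho>)"
  interpret M: prob_space ?M by (rule prob_space_PiM) (use assms in auto)
  show ?thesis
  proof (subst M.indep_vars_iff_distr_eq_PiM')
    fix i assume "i \<in> I"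
    then show "(\<lambda>z. z i) \<in> measurable ?M \<rho>" by (rule measurable_component_singleton)
  next
    have "distr ?M ?M (\<lambda>x. \<lambda>i\<in>I. x i) = distr ?M ?M (\<lambda>x. x)"
      by (rule distr_cong) (auto simp: space_PiM PiE_def extensional_restrict)
    also have "\<dots> = (\<Pi>\<^sub>M i\<in>I. distr ?M \<rho> (\<lambda>z. z i))"
      by (simp, rule PiM_cong) (use distr_PiM_component[of I "\<lambda>_. \<rho>"] assms(1) in auto)
    finally show "distr ?M ?M (\<lambda>x. \<lambda>i\<in>I. x i) = (\<Pi>\<^sub>M i\<in>I. distr ?M \<rho> (\<lambda>z. z i))" .
  qed (use assms(2) in auto)
qed

lemma hoeffding_sample_sum:
  fixes f :: "'a \<Rightarrow> real" and \<rho> :: "'a measure" and n :: nat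
  defines "M \<equiv> PiM {..<n} (\<lambda>_. \<rho>)"
  assumes \<rho>: "prob_space \<rho>" and n: "0 < n" and f: "f \<in> borel_measurable \<rho>"
    and bounds: "\<And>w. w \<in> space \<rho> \<Longrightarrow> 0 \<le> f w \<and> f w \<le> B" and "0 < B" and u: "0 \<le> u"
  shows "measure M {z \<in> space M. (\<Sum>i<n. f (z i)) \<le> real n * (\<integral>w. f w \<partial>\<rho>) - real n * u}
           \<le> exp (- 2 * real n * u\<^sup>2 / B\<^sup>2)"
    and "measure M {z \<in> space M. (\<Sum>i<n. f (z i)) \<ge> real n * (\<integral>w. f w \<partial>\<rho>) + real n * u}
           \<le> exp (- 2 * real n * u\<^sup>2 / B\<^sup>2)"
proof -
  interpret M: prob_space M unfolding M_def by (rule prob_space_PiM) (use \<rho> in auto)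
  have "M.indep_vars (\<lambda>_. \<rho>) (\<lambda>i z. z i) {..<n}"
    using indep_vars_PiM_components[OF \<rho>, of "{..<n}"] n by (simp add: M_def lessThan_empty_iff)
  then have indep: "M.indep_vars (\<lambda>_. borel) (\<lambda>i z. f (z i)) {..<n}"
    by (rule M.indep_vars_compose2) (use f in auto)
  have "AE z in M. f (z i) \<in> {0..B}" if "i < n" for i
  proof (rule AE_I2)
    fix z assume "z \<in> space M"
    then have "z i \<in> space \<rho>" using that by (auto simp: M_def space_PiM PiE_iff)
    then show "f (z i) \<in> {0..B}" using bounds by auto
  qed
  then interpret H: Hoeffding_ineq M "{..<n}" "\<lambda>i z. f (z i)" "\<lambda>_. 0" "\<lambda>_. B"
      "\<Sum>i<n. M.expectation (\<lambda>z. f (z i))"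
    by unfold_locales (use indep in auto)
  have "M.expectation (\<lambda>z. f (z i)) = (\<integral>w. f w \<partial>\<rho>)" if "i < n" for i
  proof -
    have "(\<integral>w. f w \<partial>\<rho>) = (\<integral>w. f w \<partial>(distr M \<rho> (\<lambda>z. z i)))"
      using distr_PiM_component[of "{..<n}" "\<lambda>_. \<rho>" i] that \<rho> by (simp add: M_def)
    also have "\<dots> = M.expectation (\<lambda>z. f (z i))"
      by (rule integral_distr) (use that f in \<open>auto simp: M_def intro: measurable_component_singleton\<close>)
    finally show ?thesis by simp
  qed
  then have \<mu>: "(\<Sum>i<n. M.expectation (\<lambda>z. f (z i))) = real n * (\<integral>w. f w \<partial>\<rho>)" by simp
  have pos: "(\<Sum>i<n. (B - 0)\<^sup>2) > 0" using n \<open>0 < B\<close> by simp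
  have exponent: "-2 * (real n * u)\<^sup>2 / (\<Sum>i<n. (B - 0)\<^sup>2) = - 2 * real n * u\<^sup>2 / B\<^sup>2"
    using n \<open>0 < B\<close> by (simp add: power2_eq_square field_simps)
  have nu: "0 \<le> real n * u" using u by simp
  show "measure M {z \<in> space M. (\<Sum>i<n. f (z i)) \<le> real n * (\<integral>w. f w \<partial>\<rho>) - real n * u}
      \<le> exp (- 2 * real n * u\<^sup>2 / B\<^sup>2)"
    using H.Hoeffding_ineq_le[OF nu pos] unfolding \<mu> exponent .
  show "measure M {z \<in> space M. (\<Sum>i<n. f (z i)) \<ge> real n * (\<integral>w. f w \<partial>\<rho>) + real n * u}
      \<le> exp (- 2 * real n * u\<^sup>2 / B\<^sup>2)"
    using H.Hoeffding_ineq_ge[OF nu pos] unfolding \<mu> exponent .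
qed

lemma sample_deviation_union_bound:
  fixes F :: "('a \<Rightarrow> real) set" and g :: "'a \<Rightarrow> real" and \<rho> :: "'a measure"
    and n :: nat and u :: real
  defines "M \<equiv> PiM {..<n} (\<lambda>_. \<rho>)"
  defines "D \<equiv> {z \<in> space M. (\<exists>f\<in>F. (\<Sum>i<n. f (z i)) \<le> real n * (\<integral>w. f w \<partial>\<rho>) - real n * u)
                 \<or> (\<Sum>i<n. g (z i)) \<ge> real n * (\<integral>w. g w \<partial>\<rho>) + real n * u}"
  assumes \<rho>: "prob_space \<rho>" and n: "0 < n" and "finite F"
    and meas: "\<And>f. f \<in> insert g F \<Longrightarrow> f \<in> borel_measurable \<rho>"
    and bounds: "\<And>f. f \<in> insert g F \<Longrightarrow> \<forall>w\<in>space \<rho>. 0 \<le> f w \<and> f w \<le> B"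
    and "0 < B" and "0 \<le> u"
  shows "D \<in> sets M" and "measure M D \<le> (real (card F) + 1) * exp (- 2 * real n * u\<^sup>2 / B\<^sup>2)"
proof -
  interpret M: prob_space M unfolding M_def by (rule prob_space_PiM) (use \<rho> in auto)
  define lower where "lower f = {z \<in> space M. (\<Sum>i<n. f (z i)) \<le> real n * (\<integral>w. f w \<partial>\<rho>) - real n * u}" for f
  define upper where "upper = {z \<in> space M. (\<Sum>i<n. g (z i)) \<ge> real n * (\<integral>w. g w \<partial>\<rho>) + real n * u}"
  have D: "D = (\<Union>f\<in>F. lower f) \<union> upper" by (auto simp: D_def lower_def upper_def)
  have sum_meas: "(\<lambda>z. \<Sum>i<n. f (z i)) \<in> borel_measurable M" if f: "f \<in> insert g F" for f
  proof (intro borel_measurable_sum)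
    fix i assume "i \<in> {..<n}"
    then show "(\<lambda>z. f (z i)) \<in> borel_measurable M"
      using measurable_compose[OF measurable_component_singleton[of i "{..<n}" "\<lambda>_. \<rho>"] meas[OF f]]
      by (simp add: M_def)
  qed
  have lower_sets: "lower f \<in> sets M" if "f \<in> F" for f
  proof -
    have [measurable]: "(\<lambda>z. \<Sum>i<n. f (z i)) \<in> borel_measurable M" using that by (intro sum_meas) simp
    show ?thesis unfolding lower_def by measurable
  qed
  have upper_sets: "upper \<in> sets M"
  proof -
    have [measurable]: "(\<lambda>z. \<Sum>i<n. g (z i)) \<in> borel_measurable M" by (intro sum_meas) simp
    show ?thesis unfolding upper_def by measurable
  qed
  show "D \<in> sets M" unfolding D
    by (intro sets.Un sets.finite_UN) (use lower_sets upper_sets \<open>finite F\<close> in auto)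
  have "measure M D \<le> measure M (\<Union>f\<in>F. lower f) + measure M upper"
    unfolding D by (rule measure_Un_le) (use lower_sets upper_sets \<open>finite F\<close> in auto)
  also have "measure M (\<Union>f\<in>F. lower f) \<le> (\<Sum>f\<in>F. measure M (lower f))"
    by (rule M.finite_measure_subadditive_finite) (use lower_sets \<open>finite F\<close> in auto)
  also have "\<dots> \<le> (\<Sum>f\<in>F. exp (- 2 * real n * u\<^sup>2 / B\<^sup>2))"
    unfolding lower_def M_def using meas bounds
    by (intro sum_mono hoeffding_sample_sum(1)[OF \<rho> n _ _ \<open>0 < B\<close> \<open>0 \<le> u\<close>]) auto
  also have "measure M upper \<le> exp (- 2 * real n * u\<^sup>2 / B\<^sup>2)"
    unfolding upper_def M_def using meas bounds
    by (intro hoeffding_sample_sum(2)[OF \<rho> n _ _ \<open>0 < B\<close> \<open>0 \<le> u\<close>]) auto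
  finally show "measure M D \<le> (real (card F) + 1) * exp (- 2 * real n * u\<^sup>2 / B\<^sup>2)"
    by (simp add: algebra_simps)
qed

lemma excess_risk_deviation:
  fixes n Kt \<delta> c Eh Es Ej Sh Ss Sj :: real
  assumes n: "0 < n" and \<delta>: "\<delta> \<le> Kt / 3"
    and pop: "Eh - Es + c \<ge> Kt" and emp: "Sh / n - Ss / n + c \<le> 0"
    and dE: "\<bar>Eh - Ej\<bar> \<le> \<delta>" and dS: "\<bar>Sh - Sj\<bar> \<le> n * \<delta>"
  shows "Sj \<le> n * Ej - n * (Kt / 6) \<or> Ss \<ge> n * Es + n * (Kt / 6)"
proof -
  have "(Sh / n - Ss / n + c) * n \<le> 0" using emp n by (intro mult_nonpos_nonneg) auto
  then have "Sh - Ss + n * c \<le> 0" using n by (simp add: algebra_simps)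
  moreover have "n * Kt \<le> n * Eh - n * Es + n * c"
    using mult_left_mono[OF pop, of n] n by (simp add: algebra_simps)
  moreover have "\<bar>n * Eh - n * Ej\<bar> \<le> n * \<delta>"
    using mult_left_mono[OF dE, of n] n by (simp add: abs_mult right_diff_distrib[symmetric])
  moreover have "n * \<delta> \<le> n * (Kt / 3)" using mult_left_mono[OF \<delta>, of n] n by simp
  ultimately show ?thesis using dS by (auto simp: abs_le_iff)
qed

definition deviation_event ::
    "nat list \<Rightarrow> ((nat \<Rightarrow> real) \<times> real) measure \<Rightarrow> nat \<Rightarrow> (nat \<Rightarrow> real) set \<Rightarrow> (nat \<Rightarrow> real) \<Rightarrow> real
      \<Rightarrow> (nat \<Rightarrow> (nat \<Rightarrow> real) \<times> real) set" where
  "deviation_event a \<rho> n \<Phi> \<theta>s u = {z \<in> space (PiM {..<n} (\<lambda>_. \<rho>)).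
     (\<exists>\<phi>\<in>\<Phi>. (\<Sum>i<n. sq_loss a \<phi> (z i)) \<le> real n * (\<integral>w. sq_loss a \<phi> w \<partial>\<rho>) - real n * u)
     \<or> (\<Sum>i<n. sq_loss a \<theta>s (z i)) \<ge> real n * (\<integral>w. sq_loss a \<theta>s w \<partial>\<rho>) + real n * u}"

lemma deviation_event_measure:
  assumes len: "length a \<ge> 2" and input_dim: "a!0 = d"
    and rho: "prob_space \<rho>" "sets \<rho> = sets (cube_measure d \<Otimes>\<^sub>M count_space {-1, 1::real})"
    and n: "0 < n" and fin: "finite \<Phi>" and u: "0 \<le> u"
  shows "deviation_event a \<rho> n \<Phi> \<theta>s u \<in> sets (PiM {..<n} (\<lambda>_. \<rho>))"
    and "measure (PiM {..<n} (\<lambda>_. \<rho>)) (deviation_event a \<rho> n \<Phi> \<theta>s u)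
           \<le> (real (card \<Phi>) + 1) * exp (- real n * u\<^sup>2 / 8)"
proof -
  have meas: "f \<in> borel_measurable \<rho>" if "f \<in> insert (sq_loss a \<theta>s) (sq_loss a ` \<Phi>)" for f
    using that sq_loss_measurable[OF len input_dim rho(2)] by blast
  have bounds: "\<forall>w\<in>space \<rho>. 0 \<le> f w \<and> f w \<le> 4" if "f \<in> insert (sq_loss a \<theta>s) (sq_loss a ` \<Phi>)" for f
    using that sq_loss_bounds sample_point_in_cube(2)[OF rho(2)] by blast
  have event: "deviation_event a \<rho> n \<Phi> \<theta>s u = {z \<in> space (PiM {..<n} (\<lambda>_. \<rho>)).
     (\<exists>f\<in>sq_loss a ` \<Phi>. (\<Sum>i<n. f (z i)) \<le> real n * (\<integral>w. f w \<partial>\<rho>) - real n * u)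
     \<or> (\<Sum>i<n. sq_loss a \<theta>s (z i)) \<ge> real n * (\<integral>w. sq_loss a \<theta>s w \<partial>\<rho>) + real n * u}"
    unfolding deviation_event_def by auto
  note union = sample_deviation_union_bound[where g="sq_loss a \<theta>s" and B=4,
      OF rho(1) n finite_imageI[OF fin]]
  show "deviation_event a \<rho> n \<Phi> \<theta>s u \<in> sets (PiM {..<n} (\<lambda>_. \<rho>))"
    unfolding event by (rule union(1)) (use meas bounds u in auto)
  have "real (card (sq_loss a ` \<Phi>)) + 1 \<le> real (card \<Phi>) + 1" by (simp add: card_image_le fin)
  then have "(real (card (sq_loss a ` \<Phi>)) + 1) * exp (- 2 * real n * u\<^sup>2 / 4\<^sup>2)
      \<le> (real (card \<Phi>) + 1) * exp (- real n * u\<^sup>2 / 8)"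
    by (simp add: mult_right_mono)
  moreover have "measure (PiM {..<n} (\<lambda>_. \<rho>)) (deviation_event a \<rho> n \<Phi> \<theta>s u)
      \<le> (real (card (sq_loss a ` \<Phi>)) + 1) * exp (- 2 * real n * u\<^sup>2 / 4\<^sup>2)"
    unfolding event by (rule union(2)) (use meas bounds u in auto)
  ultimately show "measure (PiM {..<n} (\<lambda>_. \<rho>)) (deviation_event a \<rho> n \<Phi> \<theta>s u)
      \<le> (real (card \<Phi>) + 1) * exp (- real n * u\<^sup>2 / 8)"
    by linarith
qed

lemma far_minimizer_imp_deviation:
  assumes len: "length a \<ge> 2" and input_dim: "a!0 = d"
    and rho: "prob_space \<rho>" "sets \<rho> = sets (cube_measure d \<Otimes>\<^sub>M count_space {-1, 1::real})"
    and n: "0 < n" and lam: "0 \<le> lam" and A3: "A3 a R p \<rho> K r" and t: "0 < t"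
    and z: "z \<in> space (PiM {..<n} (\<lambda>_. \<rho>))"
    and erm: "h \<in> argmin_on (params a R) (emp_risk a p lam n z)"
    and far: "pdist a h (argmin_on (params a R) (pop_risk a p lam \<rho>)) \<ge> t"
    and \<theta>s: "\<theta>s \<in> argmin_on (params a R) (pop_risk a p lam \<rho>)"
    and net: "\<And>\<theta>. \<theta> \<in> params a R \<Longrightarrow> \<exists>\<phi>\<in>\<Phi>. \<forall>x\<in>cube d. \<bar>realize a \<theta> x - realize a \<phi> x\<bar> \<le> 2 * e"
    and e: "e \<le> K * t powr r / 24"
  shows "z \<in> deviation_event a \<rho> n \<Phi> \<theta>s (K * t powr r / 6)"
proof -
  let ?E = "\<lambda>\<theta>. \<integral>w. sq_loss a \<theta> w \<partial>\<rho>" and ?S = "\<lambda>\<theta>. \<Sum>i<n. sq_loss a \<theta> (z i)"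
    and ?reg = "\<lambda>\<theta>. lam / 2 * norm_pp a p \<theta>"
  have h: "h \<in> params a R" and \<theta>s_params: "\<theta>s \<in> params a R"
    using erm \<theta>s by (auto simp: argmin_on_def)
  obtain \<phi> where "\<phi> \<in> \<Phi>" and close: "\<forall>x\<in>cube d. \<bar>realize a h x - realize a \<phi> x\<bar> \<le> 2 * e"
    using net[OF h] by blast
  have "pop_risk a p lam \<rho> h - pop_risk a p lam \<rho> \<theta>s \<ge> K * t powr r"
    using A3 lam t \<theta>s h far unfolding A3_def by blast
  then have pop: "?E h - ?E \<theta>s + (?reg h - ?reg \<theta>s) \<ge> K * t powr r"
    unfolding pop_risk_eq by linarith
  have "emp_risk a p lam n z h \<le> emp_risk a p lam n z \<theta>s"
    using erm \<theta>s_params by (auto simp: argmin_on_def)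
  then have emp: "?S h / real n - ?S \<theta>s / real n + (?reg h - ?reg \<theta>s) \<le> 0"
    unfolding emp_risk_eq by linarith
  have sample: "z i \<in> space \<rho>" if "i < n" for i
    using z that by (auto simp: space_PiM PiE_iff)
  have "?S \<phi> \<le> real n * ?E \<phi> - real n * (K * t powr r / 6)
    \<or> ?S \<theta>s \<ge> real n * ?E \<theta>s + real n * (K * t powr r / 6)"
  proof (rule excess_risk_deviation[OF _ _ pop emp])
    show "\<bar>?E h - ?E \<phi>\<bar> \<le> 4 * (2 * e)"
      by (rule expected_sq_loss_diff_le[OF len input_dim rho close[rule_format]])
    show "\<bar>?S h - ?S \<phi>\<bar> \<le> real n * (4 * (2 * e))"
      by (rule sample_sq_loss_diff_le[OF len input_dim rho close[rule_format] sample])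
  qed (use n e in auto)
  then have "(\<exists>\<phi>'\<in>\<Phi>. ?S \<phi>' \<le> real n * ?E \<phi>' - real n * (K * t powr r / 6))
    \<or> ?S \<theta>s \<ge> real n * ?E \<theta>s + real n * (K * t powr r / 6)"
    using \<open>\<phi> \<in> \<Phi>\<close> by blast
  then show ?thesis using z unfolding deviation_event_def by blast
qed

lemma pdist_params_zero_radius:
  assumes "0 < nparams a" "\<theta> \<in> params a 0" "A \<subseteq> params a 0" "A \<noteq> {}"
  shows "pdist a \<theta> A = 0"
proof -
  have zero: "\<psi> = (\<lambda>_. 0)" if "\<psi> \<in> params a 0" for \<psi>
  proof
    fix i show "\<psi> i = 0" using that unfolding params_def by (cases "i < nparams a") auto
  qed
  then have "A = {\<lambda>_. 0}" using assms(3,4) by blast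
  moreover have "norm_inf a (\<lambda>_. 0) = 0"
    unfolding norm_inf_def using assms(1) by (simp add: image_constant_conv lessThan_empty_iff)
  ultimately show ?thesis unfolding pdist_def using zero[OF assms(2)] by simp
qed

lemma union_bound_le_cover_bound:
  fixes K t r :: real
  assumes "1 \<le> m" "m \<le> N" "0 < t"
  shows "(real m + 1) * exp (- real n * (K * t powr r / 6)\<^sup>2 / 8)
    \<le> 4 * real N * exp (- real n * K\<^sup>2 * t powr (2 * r) / 288)"
proof -
  have "(t powr r)\<^sup>2 = t powr (2 * r)" using assms(3) by (simp add: powr_power)
  then have exponent: "- real n * (K * t powr r / 6)\<^sup>2 / 8 = - real n * K\<^sup>2 * t powr (2 * r) / 288"
    by (simp add: power_mult_distrib field_simps)
  have "real m + 1 \<le> 4 * real N" using assms(1,2) by linarith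
  then show ?thesis unfolding exponent by (rule mult_right_mono) simp
qed

theorem lemma10:
  fixes a :: "nat list" and d n :: nat and R p lam K r t :: real
    and \<rho> :: "((nat \<Rightarrow> real) \<times> real) measure"
    and \<theta>hat :: "(nat \<Rightarrow> (nat \<Rightarrow> real) \<times> real) \<Rightarrow> (nat \<Rightarrow> real)"
  assumes arch: "length a \<ge> 2" "a!0 = d" "last a = 1" "\<forall>l<length a. 0 < a!l"
    and rho: "prob_space \<rho>" "sets \<rho> = sets (cube_measure d \<Otimes>\<^sub>M count_space {-1, 1::real})"
    and p: "0 < p"
    and n: "0 < n"
    and lam: "0 \<le> lam"
    and minnorm: "\<forall>z\<in>space (PiM {..<n} (\<lambda>_. \<rho>)). min_norm_sol a R p lam n z (\<theta>hat z)"
    and K: "0 < K" and r: "1 < r" and A3: "A3 a R p \<rho> K r"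
    and t: "0 < t"
  shows "\<exists>A\<in>sets (PiM {..<n} (\<lambda>_. \<rho>)).
     {z\<in>space (PiM {..<n} (\<lambda>_. \<rho>)).
        pdist a (\<theta>hat z) (argmin_on (params a R) (pop_risk a p lam \<rho>)) \<ge> t} \<subseteq> A
     \<and> measure (PiM {..<n} (\<lambda>_. \<rho>)) A
       \<le> 4 * real (Cov_inf a R (K * t powr r / (24 * Lip_real a R)))
           * exp (- real n * K\<^sup>2 * t powr (2 * r) / 288)"
proof -
  let ?M = "PiM {..<n} (\<lambda>_. \<rho>)" and ?A = "argmin_on (params a R) (pop_risk a p lam \<rho>)"
    and ?Kt = "K * t powr r" and ?e = "K * t powr r / (24 * Lip_real a R)"
  interpret M: prob_space ?M by (rule prob_space_PiM) (use rho in auto)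
  have erm: "\<theta>hat z \<in> argmin_on (params a R) (emp_risk a p lam n z)" if "z \<in> space ?M" for z
    using minnorm that unfolding min_norm_sol_def argmin_on_def by blast
  obtain z0 where "z0 \<in> space ?M" using M.not_empty by blast
  then have "params a R \<noteq> {}" using erm by (auto simp: argmin_on_def)
  then obtain \<theta>s where \<theta>s: "\<theta>s \<in> ?A"
    using argmin_pop_risk_nonempty[OF arch(1,4,2) rho p] by blast
  consider "R = 0" | "0 < R"
    using params_radius_nonneg \<open>params a R \<noteq> {}\<close> nparams_pos[OF arch(1,4)] by fastforce
  then show ?thesis
  proof cases
    case 1
    then have "pdist a (\<theta>hat z) ?A = 0" if "z \<in> space ?M" for z
      using erm[OF that] \<theta>s nparams_pos[OF arch(1,4)]
      by (intro pdist_params_zero_radius) (auto simp: argmin_on_def)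
    then show ?thesis using t by (intro bexI[of _ "{}"]) auto
  next
    case 2
    have "1 \<le> Lip_real a R" by (rule Lip_real_ge_1[OF arch(1,4,3) 2])
    then have e: "0 < ?e" "?e \<le> ?Kt / 24"
      using K t frac_le[of ?Kt ?Kt 24 "24 * Lip_real a R"] by auto
    obtain \<Phi> where \<Phi>: "finite \<Phi>" "\<Phi> \<noteq> {}" "\<Phi> \<subseteq> params a R" "card \<Phi> \<le> Cov_inf a R ?e"
      and net: "\<And>\<theta>. \<theta> \<in> params a R \<Longrightarrow> \<exists>\<phi>\<in>\<Phi>. \<forall>x\<in>cube (a!0). \<bar>realize a \<theta> x - realize a \<phi> x\<bar> \<le> 2 * ?e"
      using realization_net[OF arch(1,4) e(1) \<open>params a R \<noteq> {}\<close>] by blast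
    let ?D = "deviation_event a \<rho> n \<Phi> \<theta>s (?Kt / 6)"
    have "{z\<in>space ?M. pdist a (\<theta>hat z) ?A \<ge> t} \<subseteq> ?D"
      using far_minimizer_imp_deviation[OF arch(1,2) rho n lam A3 t _ erm _ \<theta>s net[unfolded arch(2)] e(2)]
      by blast
    moreover have "measure ?M ?D \<le> (real (card \<Phi>) + 1) * exp (- real n * (?Kt / 6)\<^sup>2 / 8)"
      using deviation_event_measure[OF arch(1,2) rho n \<Phi>(1)] K t by simp
    moreover have "\<dots> \<le> 4 * real (Cov_inf a R ?e) * exp (- real n * K\<^sup>2 * t powr (2 * r) / 288)"
      using \<Phi> t by (intro union_bound_le_cover_bound) (auto simp: Suc_le_eq card_gt_0_iff)
    ultimately show ?thesis
      using deviation_event_measure(1)[OF arch(1,2) rho n \<Phi>(1)] K t by (intro bexI[of _ ?D]) auto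
  qed
qed

end
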